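(* Let $n=p^{\alpha}qr$ where $p,q,r$ are distinct primes and $\alpha\geq 1$ is an integer. Then the complement graph $\mathbb{AG}^c(\mathbb{Z}_n)$ of $\mathbb{AG}(\mathbb{Z}_n)$ has no induced cycle of odd length greater than $3$.
   Context: For a commutative ring $R$ with unity, the annihilating-ideal graph $\mathbb{AG}(R)$ is the simple graph whose vertex set is the set of all non-zero ideals of $R$ with non-zero annihilator, two distinct vertices $I,J$ being adjacent if and only if $IJ=0$. $\mathbb{AG}^c(R)$ denotes its complement (same vertex set, two distinct vertices adjacent iff they are not adjacent in $\mathbb{AG}(R)$). An induced cycle is an induced subgraph isomorphic to a cycle. *)

theory Defs
  imports "HOL-Algebra.Ideal_Product" "HOL-Number_Theory.Residues"
begin

definition ann :: "('a, 'b) ring_scheme \<Rightarrow> 'a set \<Rightarrow> 'a set" where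
  "ann R I = {x \<in> carrier R. \<forall>y\<in>I. x \<otimes>\<^bsub>R\<^esub> y = \<zero>\<^bsub>R\<^esub>}"

definition AG_vertices :: "('a, 'b) ring_scheme \<Rightarrow> 'a set set" where
  "AG_vertices R = {I. ideal I R \<and> I \<noteq> {\<zero>\<^bsub>R\<^esub>} \<and> ann R I \<noteq> {\<zero>\<^bsub>R\<^esub>}}"

definition AG_adj :: "('a, 'b) ring_scheme \<Rightarrow> 'a set \<Rightarrow> 'a set \<Rightarrow> bool" where
  "AG_adj R I J \<longleftrightarrow> I \<in> AG_vertices R \<and> J \<in> AG_vertices R \<and> I \<noteq> J
      \<and> ideal_prod R I J = {\<zero>\<^bsub>R\<^esub>}"

definition AGc_adj :: "('a, 'b) ring_scheme \<Rightarrow> 'a set \<Rightarrow> 'a set \<Rightarrow> bool" where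
  "AGc_adj R I J \<longleftrightarrow> I \<in> AG_vertices R \<and> J \<in> AG_vertices R \<and> I \<noteq> J
      \<and> \<not> AG_adj R I J"

definition has_induced_cycle :: "'v set \<Rightarrow> ('v \<Rightarrow> 'v \<Rightarrow> bool) \<Rightarrow> nat \<Rightarrow> bool" where
  "has_induced_cycle V E k \<longleftrightarrow> 3 \<le> k \<and>
     (\<exists>f. (\<forall>i<k. f i \<in> V) \<and> inj_on f {..<k} \<and>
          (\<forall>i<k. \<forall>j<k. E (f i) (f j) \<longleftrightarrow> (j = Suc i mod k \<or> i = Suc j mod k)))"

end

theory Submission
  imports Defs
begin

(* Every non-zero ideal I of Z_n consists of the multiples of its least positive element g_I,
   so IJ = 0 iff n divides g_I g_J.  For n = p^alpha q r this fails exactly when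
   v_p(g_I) + v_p(g_J) < alpha, or q divides neither generator, or r divides neither.  Hence
   the complement graph is the union of a threshold graph (weights v_p(g_I), threshold alpha)
   and two cliques.

   A clique contains at most one edge of an induced cycle of length k >= 4, so at most two
   cycle edges fail to be threshold edges, and if k >= 5 there are consecutive cycle vertices
   a, b, c, d with ab and cd threshold edges.  Adding w a + w b < alpha and w c + w d < alpha
   gives w a + w c < alpha or w b + w d < alpha, i.e. a chord. *)

definition cycle_adj :: "nat \<Rightarrow> nat \<Rightarrow> nat \<Rightarrow> bool" where
  "cycle_adj k i j \<longleftrightarrow> j = Suc i mod k \<or> i = Suc j mod k"

lemma has_induced_cycle_iff:
  "has_induced_cycle V E k \<longleftrightarrow> 3 \<le> k \<and>
     (\<exists>f. (\<forall>i<k. f i \<in> V) \<and> inj_on f {..<k} \<and> (\<forall>i<k. \<forall>j<k. E (f i) (f j) \<longleftrightarrow> cycle_adj k i j))"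
  unfolding has_induced_cycle_def cycle_adj_def ..

lemma Suc_mod_if: "i < k \<Longrightarrow> Suc i mod k = (if Suc i = k then 0 else Suc i)"
  by auto

lemma Suc_Suc_mod_if:
  assumes "2 \<le> k" "i < k"
  shows "Suc (Suc i) mod k = (if Suc (Suc i) < k then Suc (Suc i) else Suc (Suc i) - k)"
  using assms by (simp add: mod_if)

lemma not_cycle_adj_Suc_Suc:
  assumes "4 \<le> k" "i < k"
  shows "\<not> cycle_adj k i (Suc (Suc i) mod k)"
  using assms by (auto simp: cycle_adj_def Suc_mod_if Suc_Suc_mod_if split: if_splits)

lemma Suc_Suc_mod_neq:
  assumes "3 \<le> k" "i < k"
  shows "Suc (Suc i) mod k \<noteq> i"
  using assms by (auto simp: Suc_Suc_mod_if)

lemma cycle_clique_card_edges_le_1: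
  assumes "4 \<le> k"
    and clique: "\<And>i j. i < k \<Longrightarrow> j < k \<Longrightarrow> i \<noteq> j \<Longrightarrow> P i \<Longrightarrow> P j \<Longrightarrow> cycle_adj k i j"
  shows "card {i. i < k \<and> P i \<and> P (Suc i mod k)} \<le> 1"
proof -
  have no_two_consecutive: False
    if "j < k" "P j" "P (Suc i mod k)" and i: "i = Suc j mod k" for i j
  proof -
    have "Suc i mod k = Suc (Suc j) mod k" using i by (simp add: mod_Suc_eq)
    then show False
      using clique[of j "Suc (Suc j) mod k"] not_cycle_adj_Suc_Suc[of k j] Suc_Suc_mod_neq[of k j] that assms
      by simp
  qed
  have "i = j" if "i < k" "P i" "P (Suc i mod k)" "j < k" "P j" "P (Suc j mod k)" for i j
    using clique[of i j] no_two_consecutive[of j i] no_two_consecutive[of i j] that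
    by (auto simp: cycle_adj_def)
  then show ?thesis
    unfolding One_nat_def by (subst card_le_Suc0_iff_eq) auto
qed

lemma exists_shifted_pair_notin:
  fixes S :: "nat set"
  assumes "finite S" "2 * card S < k"
  shows "\<exists>i<k. i \<notin> S \<and> (i + d) mod k \<notin> S"
proof -
  define T where "T = {i. i < k \<and> (i + d) mod k \<in> S}"
  have "inj_on (\<lambda>i. (i + d) mod k) T"
  proof (rule inj_onI)
    fix i j assume "i \<in> T" "j \<in> T" "(i + d) mod k = (j + d) mod k"
    then have "[i = j] (mod k)" by (simp add: T_def flip: cong_def cong_add_rcancel_nat[of i d j])
    then show "i = j" using \<open>i \<in> T\<close> \<open>j \<in> T\<close> by (simp add: T_def cong_def)
  qed
  then have "card T \<le> card S"
    by (rule card_inj_on_le) (auto simp: T_def assms(1))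
  then have "card (S \<union> T) < card {..<k}"
    using card_Un_le[of S T] assms(2) by simp
  moreover have "finite (S \<union> T)" using assms(1) by (simp add: T_def)
  ultimately have "\<not> {..<k} \<subseteq> S \<union> T"
    using card_mono leD by blast
  then show ?thesis by (auto simp: T_def)
qed

lemma add_less_imp_cross_add_less:
  fixes a b c d t :: "'a::linordered_cancel_ab_semigroup_add"
  assumes "a + b < t" "c + d < t"
  shows "a + c < t \<or> b + d < t"
proof (rule ccontr)
  assume "\<not> ?thesis"
  then have "t + t \<le> (a + c) + (b + d)" by (intro add_mono) (simp_all add: not_less)
  also have "\<dots> = (a + b) + (c + d)" by (simp add: ac_simps)
  also have "\<dots> < t + t" using assms by (rule add_strict_mono)
  finally show False by simp
qed

lemma cycle_not_threshold_two_cliques: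
  fixes a :: "nat \<Rightarrow> 'a::linordered_cancel_ab_semigroup_add"
  assumes "5 \<le> k"
    and adj: "\<And>i j. i < k \<Longrightarrow> j < k \<Longrightarrow> i \<noteq> j \<Longrightarrow>
      cycle_adj k i j \<longleftrightarrow> a i + a j < t \<or> (A i \<and> A j) \<or> (B i \<and> B j)"
  shows False
proof -
  have Suc_mod_neq: "Suc i mod k \<noteq> i" if "i < k" for i
    using that assms(1) by (auto simp: Suc_mod_if)
  define clique_edges where "clique_edges P = {i. i < k \<and> P i \<and> P (Suc i mod k)}" for P
  have k4: "4 \<le> k" using assms(1) by simp
  have card_clique_edges: "card (clique_edges A) \<le> 1" "card (clique_edges B) \<le> 1"
    unfolding clique_edges_def by (rule cycle_clique_card_edges_le_1[OF k4], simp add: adj)+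
  define heavy where "heavy = {i. i < k \<and> \<not> a i + a (Suc i mod k) < t}"
  have "heavy \<subseteq> clique_edges A \<union> clique_edges B"
  proof
    fix i assume "i \<in> heavy"
    then show "i \<in> clique_edges A \<union> clique_edges B"
      using adj[of i "Suc i mod k"] cycle_adj_def Suc_mod_neq[of i]
      by (auto simp: heavy_def clique_edges_def)
  qed
  then have "card heavy \<le> card (clique_edges A \<union> clique_edges B)"
    by (rule card_mono[rotated]) (simp add: clique_edges_def)
  also have "\<dots> \<le> card (clique_edges A) + card (clique_edges B)"
    by (rule card_Un_le)
  finally have "2 * card heavy < k"
    using card_clique_edges assms(1) by linarith
  then obtain i where i: "i < k" "i \<notin> heavy" "(i + 2) mod k \<notin> heavy"
    using exists_shifted_pair_notin[of heavy k 2] by (auto simp: heavy_def)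
  define j where "j = Suc i mod k"
  define l where "l = Suc j mod k"
  define m where "m = Suc l mod k"
  have jlm: "j < k" "l < k" "m < k" "l = Suc (Suc i) mod k" "m = Suc (Suc j) mod k"
    using assms(1) unfolding m_def l_def j_def by (simp_all add: mod_simps)
  have "a i + a j < t" "a l + a m < t"
    using i jlm by (simp_all add: heavy_def j_def m_def eval_nat_numeral)
  then have "a i + a l < t \<or> a j + a m < t"
    by (rule add_less_imp_cross_add_less)
  moreover have "\<not> cycle_adj k i l" "\<not> cycle_adj k j m"
    using not_cycle_adj_Suc_Suc assms(1) i(1) jlm by simp_all
  moreover have "l \<noteq> i" "m \<noteq> j"
    using Suc_Suc_mod_neq assms(1) i(1) jlm by simp_all
  ultimately show False
    using adj[of i l] adj[of j m] i(1) jlm by auto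
qed

lemma no_long_induced_cycle_threshold_two_cliques:
  fixes w :: "'v \<Rightarrow> 'a::linordered_cancel_ab_semigroup_add"
  assumes adj: "\<And>u v. u \<in> V \<Longrightarrow> v \<in> V \<Longrightarrow>
      E u v \<longleftrightarrow> u \<noteq> v \<and> (w u + w v < t \<or> (A u \<and> A v) \<or> (B u \<and> B v))"
    and "5 \<le> k"
  shows "\<not> has_induced_cycle V E k"
proof
  assume "has_induced_cycle V E k"
  then obtain f where f: "\<forall>i<k. f i \<in> V" "inj_on f {..<k}"
    and cycle: "\<forall>i<k. \<forall>j<k. E (f i) (f j) \<longleftrightarrow> cycle_adj k i j"
    unfolding has_induced_cycle_iff by blast
  show False
  proof (rule cycle_not_threshold_two_cliques)
    show "5 \<le> k" by fact
    fix i j assume ij: "i < k" "j < k" "i \<noteq> j"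
    have "cycle_adj k i j \<longleftrightarrow> E (f i) (f j)"
      using cycle ij by simp
    also have "\<dots> \<longleftrightarrow> w (f i) + w (f j) < t \<or> (A (f i) \<and> A (f j)) \<or> (B (f i) \<and> B (f j))"
      using adj f ij by (auto dest: inj_onD)
    finally show "cycle_adj k i j \<longleftrightarrow> w (f i) + w (f j) < t \<or> (A (f i) \<and> A (f j)) \<or> (B (f i) \<and> B (f j))" .
  qed
qed

lemma (in ring) ideal_prod_eq_zero_iff:
  assumes "ideal I R" "ideal J R"
  shows "ideal_prod R I J = {\<zero>} \<longleftrightarrow> (\<forall>x\<in>I. \<forall>y\<in>J. x \<otimes> y = \<zero>)"
proof
  assume "ideal_prod R I J = {\<zero>}"
  then show "\<forall>x\<in>I. \<forall>y\<in>J. x \<otimes> y = \<zero>"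
    by (metis ideal_prod.prod singletonD)
next
  assume zero: "\<forall>x\<in>I. \<forall>y\<in>J. x \<otimes> y = \<zero>"
  have "\<zero> \<in> I" "\<zero> \<in> J"
    using assms by (simp_all add: additive_subgroup.zero_closed ideal.axioms(1))
  then have "\<zero> \<in> ideal_prod R I J"
    using ideal_prod.prod[of \<zero> I \<zero> J R] by simp
  moreover have "s = \<zero>" if "s \<in> ideal_prod R I J" for s
    using that by (induction rule: ideal_prod.induct) (simp_all add: zero)
  ultimately show "ideal_prod R I J = {\<zero>}" by blast
qed

(* The zero ideal gets the junk value Min {}. *)
definition ideal_gen :: "int set \<Rightarrow> int" where
  "ideal_gen I = Min {x \<in> I. 0 < x}"

context residues
begin

lemma ideal_mod_closed:
  assumes "ideal I R" "x \<in> I" "g \<in> I" "0 < g"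
  shows "x mod g \<in> I"
proof -
  interpret ideal I R by fact
  have x: "0 \<le> x" "x < m" using Icarr[OF assms(2)] res_carrier_eq by auto
  moreover have "x div g \<le> x"
    using x(1) by (cases "x = 0") (simp_all add: int_div_le_self)
  ultimately have "x div g \<in> carrier R"
    using assms(4) by (simp add: res_carrier_eq pos_imp_zdiv_nonneg_iff)
  then have "x \<oplus> \<ominus> (x div g \<otimes> g) \<in> I"
    using assms(2,3) by (simp add: I_l_closed)
  also have "x \<oplus> \<ominus> (x div g \<otimes> g) = x mod g mod m"
    by (simp add: res_add_eq res_neg_eq res_mult_eq mod_simps minus_div_mult_eq_mod)
  also have "\<dots> = x mod g"
    using x zmod_le_nonneg_dividend[of x g] assms(4) by simp
  finally show ?thesis .
qed

lemma
  assumes "ideal I R" "I \<noteq> {\<zero>}"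
  shows ideal_gen_mem: "ideal_gen I \<in> I"
    and ideal_gen_pos: "0 < ideal_gen I"
    and ideal_gen_dvd: "x \<in> I \<Longrightarrow> ideal_gen I dvd x"
proof -
  interpret ideal I R by fact
  define S where "S = {x \<in> I. 0 < x}"
  have nonneg: "0 \<le> x" if "x \<in> I" for x
    using Icarr[OF that] res_carrier_eq by auto
  have "S \<subseteq> carrier R"
    using Icarr by (auto simp: S_def)
  then have "finite S"
    by (rule finite_subset) (simp add: res_carrier_eq)
  moreover have "S \<noteq> {}"
    using assms(2) zero_closed nonneg by (fastforce simp: S_def res_zero_eq)
  ultimately have "ideal_gen I \<in> S" and least: "\<And>y. y \<in> S \<Longrightarrow> ideal_gen I \<le> y"
    by (simp_all add: ideal_gen_def S_def[symmetric])
  then show gen: "ideal_gen I \<in> I" "0 < ideal_gen I" by (simp_all add: S_def)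
  assume "x \<in> I"
  then have "x mod ideal_gen I \<in> I"
    using ideal_mod_closed assms(1) gen by blast
  then have "x mod ideal_gen I \<notin> S"
    using least gen(2) by (meson pos_mod_bound not_less)
  then show "ideal_gen I dvd x"
    using \<open>x mod ideal_gen I \<in> I\<close> gen(2) by (simp add: S_def dvd_eq_mod_eq_0 order_less_le)
qed

lemma ideal_prod_eq_zero_iff_dvd_ideal_gen:
  assumes "ideal I R" "I \<noteq> {\<zero>}" "ideal J R" "J \<noteq> {\<zero>}"
  shows "ideal_prod R I J = {\<zero>} \<longleftrightarrow> m dvd ideal_gen I * ideal_gen J"
proof -
  have "ideal_prod R I J = {\<zero>} \<longleftrightarrow> (\<forall>x\<in>I. \<forall>y\<in>J. x \<otimes> y = \<zero>)"
    using assms(1,3) by (rule ideal_prod_eq_zero_iff)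
  also have "\<dots> \<longleftrightarrow> (\<forall>x\<in>I. \<forall>y\<in>J. m dvd x * y)"
    by (simp add: res_mult_eq res_zero_eq dvd_eq_mod_eq_0)
  also have "\<dots> \<longleftrightarrow> m dvd ideal_gen I * ideal_gen J"
  proof
    assume "\<forall>x\<in>I. \<forall>y\<in>J. m dvd x * y"
    then show "m dvd ideal_gen I * ideal_gen J"
      using ideal_gen_mem[OF assms(1,2)] ideal_gen_mem[OF assms(3,4)] by blast
  next
    assume "m dvd ideal_gen I * ideal_gen J"
    then show "\<forall>x\<in>I. \<forall>y\<in>J. m dvd x * y"
      using ideal_gen_dvd[OF assms(1,2)] ideal_gen_dvd[OF assms(3,4)] by (meson dvd_trans mult_dvd_mono)
  qed
  finally show ?thesis .
qed

lemma AGc_adj_iff: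
  assumes "I \<in> AG_vertices R" "J \<in> AG_vertices R"
  shows "AGc_adj R I J \<longleftrightarrow> I \<noteq> J \<and> \<not> m dvd ideal_gen I * ideal_gen J"
proof -
  have "ideal I R" "I \<noteq> {\<zero>}" "ideal J R" "J \<noteq> {\<zero>}"
    using assms by (simp_all add: AG_vertices_def)
  then show ?thesis
    using assms by (auto simp: AGc_adj_def AG_adj_def ideal_prod_eq_zero_iff_dvd_ideal_gen)
qed

end

lemma prime_power_mult_primes_dvd_mult_iff:
  fixes p q r x y :: "'a::factorial_semiring_gcd"
  assumes "prime p" "prime q" "prime r" "p \<noteq> q" "p \<noteq> r" "q \<noteq> r" "x \<noteq> 0" "y \<noteq> 0"
  shows "p ^ \<alpha> * q * r dvd x * y \<longleftrightarrow>
    \<alpha> \<le> multiplicity p x + multiplicity p y \<and> (q dvd x \<or> q dvd y) \<and> (r dvd x \<or> r dvd y)"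
proof -
  have "coprime (p ^ \<alpha>) q" "coprime (p ^ \<alpha> * q) r"
    using assms by (simp_all add: primes_coprime)
  then have "p ^ \<alpha> * q * r dvd x * y \<longleftrightarrow> p ^ \<alpha> dvd x * y \<and> q dvd x * y \<and> r dvd x * y"
    using divides_mult[of "p ^ \<alpha>" "x * y" q] divides_mult[of "p ^ \<alpha> * q" "x * y" r]
    by (auto dest: dvd_mult_left dvd_mult_right)
  moreover have "multiplicity p (x * y) = multiplicity p x + multiplicity p y"
    using assms by (simp add: prime_elem_multiplicity_mult_distrib)
  ultimately show ?thesis
    using assms by (simp add: power_dvd_iff_le_multiplicity prime_dvd_mult_iff)
qed

theorem lemma5:
  fixes p q r \<alpha> n k :: nat
  assumes "prime p" "prime q" "prime r"
    and "p \<noteq> q" "p \<noteq> r" "q \<noteq> r"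
    and "\<alpha> \<ge> 1"
    and "n = p ^ \<alpha> * q * r"
    and "odd k" "k > 3"
  shows "\<not> has_induced_cycle (AG_vertices (residue_ring (int n))) (AGc_adj (residue_ring (int n))) k"
proof -
  let ?R = "residue_ring (int n)"
  have "1 < p ^ \<alpha>"
    using assms(7) prime_gt_1_nat[OF assms(1)] by (intro one_less_power) simp_all
  then have "1 < n"
    unfolding assms(8) using prime_gt_1_nat[OF assms(2)] prime_gt_1_nat[OF assms(3)]
    by (intro less_1_mult)
  then have "1 < int n" by simp
  then interpret residues "int n" ?R
    by unfold_locales simp_all
  have adj: "AGc_adj ?R I J \<longleftrightarrow> I \<noteq> J \<and>
      (multiplicity (int p) (ideal_gen I) + multiplicity (int p) (ideal_gen J) < \<alpha>
       \<or> (\<not> int q dvd ideal_gen I \<and> \<not> int q dvd ideal_gen J)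
       \<or> (\<not> int r dvd ideal_gen I \<and> \<not> int r dvd ideal_gen J))"
    if "I \<in> AG_vertices ?R" "J \<in> AG_vertices ?R" for I J
  proof -
    have "0 < ideal_gen I" "0 < ideal_gen J"
      using that by (simp_all add: AG_vertices_def ideal_gen_pos)
    then have "int n dvd ideal_gen I * ideal_gen J \<longleftrightarrow>
        \<alpha> \<le> multiplicity (int p) (ideal_gen I) + multiplicity (int p) (ideal_gen J)
        \<and> (int q dvd ideal_gen I \<or> int q dvd ideal_gen J)
        \<and> (int r dvd ideal_gen I \<or> int r dvd ideal_gen J)"
      using assms(1-6,8) by (simp add: prime_power_mult_primes_dvd_mult_iff)
    then show ?thesis
      using AGc_adj_iff[OF that] by auto
  qed
  moreover have "5 \<le> k"
    using assms(9,10) by presburger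
  ultimately show ?thesis
    by (rule no_long_induced_cycle_threshold_two_cliques)
qed

end
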